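(* Let $n\ge 1$, let $\Delta := (\sqrt{n+1})^{n+1}$, and let $X=\{x_1,\ldots,x_v\}\subseteq\{0,1\}^n$ be non-empty. Let $A\in\mathbb{Z}^{f\times n}$, $b\in\mathbb{Z}^f$ with all entries of absolute value at most $\Delta$ be such that $\{x\in\mathbb{R}^n\mid Ax\le b\}=\operatorname{conv}(X)$ is a non-redundant description, and let $S\in\mathbb{R}^{f\times v}$ be the slack matrix, $S_{ij}=b_i-A_ix_j$ (so $S_{ij}\in\{0,1,\ldots,(n+1)\Delta\}$). Let $S=UV$ with $U\in\mathbb{R}_{\ge0}^{f\times r}$, $V\in\mathbb{R}_{\ge 0}^{r\times v}$ be a normalized non-negative factorization, i.e. $\|U^\ell\|_\infty=\|V_\ell\|_\infty$ for every $\ell=1,\ldots,r$. Then $\|U\|_\infty\le\Delta$ and $\|V\|_\infty\le\Delta$.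
   Context: $A_i$ denotes the $i$-th row of a matrix $A$ and $A^i$ its $i$-th column; for a matrix or vector, $\|\cdot\|_\infty$ denotes the maximum absolute value of an entry. So $U^\ell$ is the $\ell$-th column of $U$ and $V_\ell$ the $\ell$-th row of $V$. *)

theory Defs
  imports "HOL-Analysis.Analysis"
begin

definition row_apply :: "('n::finite \<Rightarrow> int) \<Rightarrow> real^'n \<Rightarrow> real" where
  "row_apply a y = (\<Sum>k\<in>UNIV. of_int (a k) * y $ k)"

definition polyhedron :: "nat \<Rightarrow> (nat \<Rightarrow> 'n::finite \<Rightarrow> int) \<Rightarrow> (nat \<Rightarrow> int) \<Rightarrow> (real^'n) set" where
  "polyhedron f A b = {y. \<forall>i<f. row_apply (A i) y \<le> of_int (b i)}"

definition non_redundant :: "nat \<Rightarrow> (nat \<Rightarrow> 'n::finite \<Rightarrow> int) \<Rightarrow> (nat \<Rightarrow> int) \<Rightarrow> bool" where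
  "non_redundant f A b = (\<forall>i<f.
     {y. \<forall>k<f. k \<noteq> i \<longrightarrow> row_apply (A k) y \<le> of_int (b k)} \<noteq> polyhedron f A b)"

definition slack :: "(nat \<Rightarrow> 'n::finite \<Rightarrow> int) \<Rightarrow> (nat \<Rightarrow> int) \<Rightarrow> (nat \<Rightarrow> real^'n) \<Rightarrow> nat \<Rightarrow> nat \<Rightarrow> real" where
  "slack A b x i j = of_int (b i) - row_apply (A i) (x j)"

definition col_inf_norm :: "nat \<Rightarrow> (nat \<Rightarrow> nat \<Rightarrow> real) \<Rightarrow> nat \<Rightarrow> real" where
  "col_inf_norm f U l = Max ((\<lambda>i. \<bar>U i l\<bar>) ` {..<f})"

definition row_inf_norm :: "nat \<Rightarrow> (nat \<Rightarrow> nat \<Rightarrow> real) \<Rightarrow> nat \<Rightarrow> real" where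
  "row_inf_norm v V l = Max ((\<lambda>j. \<bar>V l j\<bar>) ` {..<v})"

end

theory Submission
  imports Defs
begin

text \<open>Every slack is at most \<open>(n + 1)\<Delta>\<close>, and \<open>n + 1 \<le> \<Delta>\<close>, so every entry of \<open>S = UV\<close> is at most
  \<open>\<Delta>\<^sup>2\<close>. For a normalized factorization, let \<open>M\<close> be the common maximum of column \<open>\<ell>\<close> of \<open>U\<close> and
  row \<open>\<ell>\<close> of \<open>V\<close>, attained at \<open>U\<^sub>i\<^sub>\<ell>\<close> and \<open>V\<^sub>\<ell>\<^sub>j\<close>. By non-negativity,
  \<open>M\<^sup>2 = U\<^sub>i\<^sub>\<ell> V\<^sub>\<ell>\<^sub>j \<le> S\<^sub>i\<^sub>j \<le> \<Delta>\<^sup>2\<close>, hence \<open>M \<le> \<Delta>\<close>.\<close>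

lemma le_sqrt_power:
  fixes m :: real
  assumes "1 \<le> m" and "2 \<le> k"
  shows "m \<le> sqrt m ^ k"
proof -
  have "sqrt m ^ k = sqrt m ^ 2 * sqrt m ^ (k - 2)"
    using assms(2) by (metis le_add_diff_inverse power_add)
  also have "\<dots> \<ge> m * 1"
    using assms(1) by (simp add: one_le_power)
  finally show ?thesis by simp
qed

lemma row_apply_01_lower_bound:
  fixes a :: "'n::finite \<Rightarrow> int" and y :: "real^'n"
  assumes a_bound: "\<forall>k. \<bar>real_of_int (a k)\<bar> \<le> c"
    and y_01: "\<forall>k. y $ k \<in> {0, 1}"
  shows "- row_apply a y \<le> real CARD('n) * c"
proof -
  have "- row_apply a y \<le> (\<Sum>k\<in>UNIV. \<bar>of_int (a k) * y $ k\<bar>)"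
    unfolding row_apply_def using abs_ge_minus_self sum_abs order_trans by blast
  also have "\<dots> \<le> (\<Sum>k\<in>(UNIV::'n set). c)"
  proof (rule sum_mono)
    fix k
    have "\<bar>y $ k\<bar> \<le> 1" using y_01[rule_format, of k] by auto
    moreover have "0 \<le> c" using a_bound[rule_format, of k] by linarith
    ultimately have "\<bar>of_int (a k)\<bar> * \<bar>y $ k\<bar> \<le> c * 1"
      using a_bound by (intro mult_mono) auto
    then show "\<bar>of_int (a k) * y $ k\<bar> \<le> c" by (simp add: abs_mult)
  qed
  finally show ?thesis by simp
qed

lemma slack_upper_bound:
  fixes A :: "nat \<Rightarrow> 'n::finite \<Rightarrow> int"
  assumes "\<forall>k. \<bar>real_of_int (A i k)\<bar> \<le> c" and "\<bar>real_of_int (b i)\<bar> \<le> c"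
    and "\<forall>k. x j $ k \<in> {0, 1}"
  shows "slack A b x i j \<le> (real CARD('n) + 1) * c"
  using row_apply_01_lower_bound[OF assms(1,3)] assms(2)
  unfolding slack_def by (simp add: algebra_simps)

lemma polyhedron_nonempty_rows:
  assumes "bounded (polyhedron f A b)"
  shows "f > 0"
proof (rule ccontr)
  assume "\<not> f > 0"
  then have "polyhedron f A b = UNIV" unfolding polyhedron_def by auto
  with assms show False using not_bounded_UNIV by metis
qed

lemma col_inf_norm_ge: "i < f \<Longrightarrow> \<bar>U i l\<bar> \<le> col_inf_norm f U l"
  unfolding col_inf_norm_def by auto

lemma col_inf_norm_attained:
  assumes "f > 0"
  obtains i where "i < f" and "col_inf_norm f U l = \<bar>U i l\<bar>"
proof -
  have "col_inf_norm f U l \<in> (\<lambda>i. \<bar>U i l\<bar>) ` {..<f}"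
    unfolding col_inf_norm_def using assms by (intro Max_in) auto
  then show ?thesis using that by auto
qed

lemma row_inf_norm_ge: "j < v \<Longrightarrow> \<bar>V l j\<bar> \<le> row_inf_norm v V l"
  unfolding row_inf_norm_def by auto

lemma row_inf_norm_attained:
  assumes "v > 0"
  obtains j where "j < v" and "row_inf_norm v V l = \<bar>V l j\<bar>"
proof -
  have "row_inf_norm v V l \<in> (\<lambda>j. \<bar>V l j\<bar>) ` {..<v}"
    unfolding row_inf_norm_def using assms by (intro Max_in) auto
  then show ?thesis using that by auto
qed

lemma normalized_factor_entries_bound:
  fixes U V :: "nat \<Rightarrow> nat \<Rightarrow> real" and B :: real
  assumes "f > 0" and "v > 0" and "l < r" and "0 \<le> B"
    and U_nonneg: "\<forall>i<f. \<forall>l<r. U i l \<ge> 0"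
    and V_nonneg: "\<forall>l<r. \<forall>j<v. V l j \<ge> 0"
    and normalized: "col_inf_norm f U l = row_inf_norm v V l"
    and product_bound: "\<forall>i<f. \<forall>j<v. (\<Sum>l<r. U i l * V l j) \<le> B\<^sup>2"
  shows "(\<forall>i<f. \<bar>U i l\<bar> \<le> B) \<and> (\<forall>j<v. \<bar>V l j\<bar> \<le> B)"
proof -
  let ?M = "col_inf_norm f U l"
  obtain i where i: "i < f" "?M = \<bar>U i l\<bar>"
    using col_inf_norm_attained[OF \<open>f > 0\<close>] by blast
  obtain j where j: "j < v" "row_inf_norm v V l = \<bar>V l j\<bar>"
    using row_inf_norm_attained[OF \<open>v > 0\<close>] by blast
  have "?M\<^sup>2 = U i l * V l j"
    using i j normalized \<open>l < r\<close> U_nonneg V_nonneg by (simp add: power2_eq_square)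
  also have "\<dots> \<le> (\<Sum>l'<r. U i l' * V l' j)"
    using \<open>l < r\<close> U_nonneg V_nonneg i j by (intro member_le_sum) auto
  also have "\<dots> \<le> B\<^sup>2" using product_bound i j by blast
  finally have "?M \<le> B" using \<open>0 \<le> B\<close> by (rule power2_le_imp_le)
  then show ?thesis
    using col_inf_norm_ge[of _ f U l] row_inf_norm_ge[of _ v V l] normalized
    by (metis order_trans)
qed

theorem lemma2:
  fixes x :: "nat \<Rightarrow> real^'n" and v f r :: nat
    and A :: "nat \<Rightarrow> 'n \<Rightarrow> int" and b :: "nat \<Rightarrow> int"
    and U V :: "nat \<Rightarrow> nat \<Rightarrow> real" and \<Delta> :: real
  assumes Delta: "\<Delta> = sqrt (real CARD('n) + 1) ^ (CARD('n) + 1)"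
    and v_pos: "v \<ge> 1"
    and x_inj: "inj_on x {..<v}"
    and x_01: "\<forall>j<v. \<forall>k. x j $ k \<in> {0, 1}"
    and A_bound: "\<forall>i<f. \<forall>k. \<bar>real_of_int (A i k)\<bar> \<le> \<Delta>"
    and b_bound: "\<forall>i<f. \<bar>real_of_int (b i)\<bar> \<le> \<Delta>"
    and descr: "polyhedron f A b = convex hull (x ` {..<v})"
    and nonred: "non_redundant f A b"
    and factor: "\<forall>i<f. \<forall>j<v. slack A b x i j = (\<Sum>l<r. U i l * V l j)"
    and U_nonneg: "\<forall>i<f. \<forall>l<r. U i l \<ge> 0"
    and V_nonneg: "\<forall>l<r. \<forall>j<v. V l j \<ge> 0"
    and normalized: "\<forall>l<r. col_inf_norm f U l = row_inf_norm v V l"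
  shows "(\<forall>i<f. \<forall>l<r. \<bar>U i l\<bar> \<le> \<Delta>) \<and> (\<forall>l<r. \<forall>j<v. \<bar>V l j\<bar> \<le> \<Delta>)"
proof -
  have n_le_Delta: "real CARD('n) + 1 \<le> \<Delta>"
    unfolding Delta using finite_UNIV_card_ge_0[where 'a='n] by (intro le_sqrt_power) auto
  then have "0 \<le> \<Delta>" by linarith
  \<comment> \<open>Needed since \<open>col_inf_norm 0 U l\<close> is the junk value \<open>Max {}\<close>.\<close>
  have "f > 0"
    using descr polyhedron_nonempty_rows
    by (metis compact_imp_bounded compact_convex_hull finite_imp_compact finite_imageI finite_lessThan)
  have "\<forall>i<f. \<forall>j<v. (\<Sum>l<r. U i l * V l j) \<le> \<Delta>\<^sup>2"
  proof (intro allI impI)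
    fix i j assume "i < f" "j < v"
    then have "slack A b x i j \<le> (real CARD('n) + 1) * \<Delta>"
      using A_bound b_bound x_01 by (intro slack_upper_bound) auto
    also have "\<dots> \<le> \<Delta>\<^sup>2"
      using n_le_Delta \<open>0 \<le> \<Delta>\<close> by (simp add: power2_eq_square mult_right_mono)
    finally show "(\<Sum>l<r. U i l * V l j) \<le> \<Delta>\<^sup>2" using factor \<open>i < f\<close> \<open>j < v\<close> by simp
  qed
  then have "\<forall>l<r. (\<forall>i<f. \<bar>U i l\<bar> \<le> \<Delta>) \<and> (\<forall>j<v. \<bar>V l j\<bar> \<le> \<Delta>)"
    using \<open>f > 0\<close> v_pos \<open>0 \<le> \<Delta>\<close> U_nonneg V_nonneg normalized
    by (intro allI impI normalized_factor_entries_bound) auto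
  then show ?thesis by blast
qed

end
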